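(* Let $n\ge 1$ and let $x=x_1x_2\cdots x_n\in \mathrm{Av}_n(312)$. Then $x$ lies in the image $\mathsf{Pop}_{\mathrm{Av}_n(312)}(\mathrm{Av}_n(312))$ if and only if $x_n=n$ and $x$ has no consecutive double descent, i.e. there is no index $i$ with $x_i>x_{i+1}>x_{i+2}$.
   Context: $\mathrm{Av}_n(312)$ is the set of permutations $x_1\cdots x_n$ of $[n]$ with no indices $i<j<k$ such that $x_j<x_k<x_i$, partially ordered by the restriction of the right weak order on $S_n$ (in $S_n$, $y\lessdot x$ iff $y$ is obtained from $x$ by swapping two adjacent entries $x_i>x_{i+1}$); it is a lattice (isomorphic to the Tamari lattice). For a finite lattice $M$, $\mathsf{Pop}_M(x)=\bigwedge(\{y\in M: y\lessdot x\}\cup\{x\})$ where covers and meets are taken in $M$. *)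

theory Defs
  imports Main
begin

text \<open>Permutations of [n] as lists (0-based list indices; entries 1..n).\<close>
definition perms :: "nat \<Rightarrow> nat list set" where
  "perms n = {x. length x = n \<and> distinct x \<and> set x = {1..n}}"

definition Av312 :: "nat \<Rightarrow> nat list set" where
  "Av312 n = {x \<in> perms n. \<not> (\<exists>i j k. i < j \<and> j < k \<and> k < n \<and> x ! j < x ! k \<and> x ! k < x ! i)}"

definition weak_step :: "nat list \<Rightarrow> nat list \<Rightarrow> bool" where
  "weak_step x y \<longleftrightarrow> (\<exists>i. Suc i < length x \<and> x ! i > x ! Suc i \<and>
      y = x[i := x ! Suc i, Suc i := x ! i])"

definition weak_le :: "nat list \<Rightarrow> nat list \<Rightarrow> bool" where
  "weak_le y x \<longleftrightarrow> weak_step\<^sup>*\<^sup>* x y"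

definition covers_in :: "'a set \<Rightarrow> ('a \<Rightarrow> 'a \<Rightarrow> bool) \<Rightarrow> 'a \<Rightarrow> 'a \<Rightarrow> bool" where
  "covers_in M le y x \<longleftrightarrow> y \<in> M \<and> x \<in> M \<and> le y x \<and> y \<noteq> x \<and>
     \<not> (\<exists>z\<in>M. le y z \<and> le z x \<and> z \<noteq> y \<and> z \<noteq> x)"

definition is_meet_in :: "'a set \<Rightarrow> ('a \<Rightarrow> 'a \<Rightarrow> bool) \<Rightarrow> 'a set \<Rightarrow> 'a \<Rightarrow> bool" where
  "is_meet_in M le S m \<longleftrightarrow> m \<in> M \<and> (\<forall>s\<in>S. le m s) \<and>
     (\<forall>m'\<in>M. (\<forall>s\<in>S. le m' s) \<longrightarrow> le m' m)"

definition meet_in :: "'a set \<Rightarrow> ('a \<Rightarrow> 'a \<Rightarrow> bool) \<Rightarrow> 'a set \<Rightarrow> 'a" where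
  "meet_in M le S = (THE m. is_meet_in M le S m)"

definition Pop :: "'a set \<Rightarrow> ('a \<Rightarrow> 'a \<Rightarrow> bool) \<Rightarrow> 'a \<Rightarrow> 'a" where
  "Pop M le x = meet_in M le ({y \<in> M. covers_in M le y x} \<union> {x})"

end

theory Submission
  imports Defs
begin

text \<open>A 312-avoiding permutation \<open>x\<close> is determined by its bracket vector \<open>reach x\<close>, where
  \<open>reach x a\<close> is the largest value above \<open>a\<close> occurring before \<open>a\<close> in \<open>x\<close>. Since the weak order
  is inclusion of inversion sets, on \<open>Av312 n\<close> it becomes the componentwise order of bracket
  vectors. A lower cover of \<open>x\<close> lowers a single entry \<open>reach x a\<close> to the largest \<open>m < reach x a\<close>
  for which \<open>[a, m]\<close> is a union of brackets, so \<open>Pop\<close> lowers all entries at once. The vectors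
  obtained in this way are exactly those whose brackets end below \<open>n\<close> and never share their
  right end with a bracket nested inside; for \<open>x\<close> itself these two conditions say that
  \<open>x\<^sub>n = n\<close> and that \<open>x\<close> has no double descent.\<close>

definition precedes :: "'a list \<Rightarrow> 'a \<Rightarrow> 'a \<Rightarrow> bool" where
  "precedes x u v \<longleftrightarrow> (\<exists>i j. i < j \<and> j < length x \<and> x ! i = u \<and> x ! j = v)"

lemma precedes_in_set: "precedes x u v \<Longrightarrow> u \<in> set x \<and> v \<in> set x"
  unfolding precedes_def by auto

lemma precedes_irrefl: "distinct x \<Longrightarrow> \<not> precedes x u u"
  unfolding precedes_def using nth_eq_iff_index_eq by fastforce

lemma precedes_asym: "distinct x \<Longrightarrow> precedes x u v \<Longrightarrow> \<not> precedes x v u"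
  unfolding precedes_def
  by (metis nth_eq_iff_index_eq order.strict_trans not_less_iff_gr_or_eq)

lemma precedes_trans: "distinct x \<Longrightarrow> precedes x u v \<Longrightarrow> precedes x v w \<Longrightarrow> precedes x u w"
  unfolding precedes_def by (metis nth_eq_iff_index_eq order.strict_trans)

lemma precedes_total:
  "u \<in> set x \<Longrightarrow> v \<in> set x \<Longrightarrow> u \<noteq> v \<Longrightarrow> precedes x u v \<or> precedes x v u"
  unfolding precedes_def in_set_conv_nth by (metis linorder_neqE_nat)

lemma precedes_iff_not_precedes:
  "distinct x \<Longrightarrow> u \<in> set x \<Longrightarrow> v \<in> set x \<Longrightarrow> u \<noteq> v \<Longrightarrow> precedes x u v \<longleftrightarrow> \<not> precedes x v u"
  using precedes_total precedes_asym by metis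

lemma precedes_nth_iff:
  "distinct x \<Longrightarrow> i < length x \<Longrightarrow> j < length x \<Longrightarrow> precedes x (x ! i) (x ! j) \<longleftrightarrow> i < j"
  unfolding precedes_def using nth_eq_iff_index_eq by fastforce

lemma precedes_nthE:
  assumes "distinct x" "j < length x" "precedes x u (x ! j)"
  obtains i where "i < j" "x ! i = u"
  using assms nth_eq_iff_index_eq unfolding precedes_def by metis

lemma precedes_Cons: "precedes (c # x) u v \<longleftrightarrow> (u = c \<and> v \<in> set x) \<or> precedes x u v"
proof
  assume "precedes (c # x) u v"
  then obtain i j where ij: "i < j" "j < length (c # x)" "(c # x) ! i = u" "(c # x) ! j = v"
    unfolding precedes_def by blast
  then obtain j' where j': "j = Suc j'" by (cases j) auto
  show "(u = c \<and> v \<in> set x) \<or> precedes x u v"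
  proof (cases i)
    case 0 then show ?thesis using ij j' by auto
  next
    case (Suc i') then show ?thesis using ij j' unfolding precedes_def by auto
  qed
next
  assume "(u = c \<and> v \<in> set x) \<or> precedes x u v"
  then show "precedes (c # x) u v"
  proof
    assume "u = c \<and> v \<in> set x"
    then obtain j where "j < length x" "x ! j = v" "u = c" by (auto simp: in_set_conv_nth)
    then show ?thesis unfolding precedes_def by (intro exI[of _ 0] exI[of _ "Suc j"]) auto
  next
    assume "precedes x u v"
    then obtain i j where "i < j" "j < length x" "x ! i = u" "x ! j = v"
      unfolding precedes_def by blast
    then show ?thesis unfolding precedes_def by (intro exI[of _ "Suc i"] exI[of _ "Suc j"]) auto
  qed
qed

lemma precedes_Nil [simp]: "\<not> precedes [] u v"
  unfolding precedes_def by simp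

lemma precedes_append:
  "precedes (x @ y) u v \<longleftrightarrow> precedes x u v \<or> precedes y u v \<or> (u \<in> set x \<and> v \<in> set y)"
  by (induction x) (auto simp: precedes_Cons)

lemma list_eq_if_precedes_eq:
  assumes "distinct x" "distinct y" "set x = set y" "\<And>u v. precedes x u v \<longleftrightarrow> precedes y u v"
  shows "x = y"
  using assms
proof (induction x arbitrary: y)
  case Nil then show ?case by simp
next
  case (Cons a xs)
  obtain b ys where y: "y = b # ys" using Cons.prems(3) by (cases y) auto
  have "a = b"
  proof (rule ccontr)
    assume "a \<noteq> b"
    then have "precedes (a # xs) a b" "precedes y b a"
      using Cons.prems(3) y by (auto simp: precedes_Cons)
    then show False using Cons.prems(2,4) precedes_asym by metis
  qed
  moreover have "xs = ys"
  proof (rule Cons.IH)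
    show "distinct xs" "distinct ys" "set xs = set ys" using Cons.prems(1-3) y \<open>a = b\<close> by auto
    show "precedes xs u v \<longleftrightarrow> precedes ys u v" for u v
    proof -
      have "a \<notin> set xs" "a \<notin> set ys" using Cons.prems(1,2) y \<open>a = b\<close> by auto
      moreover have "precedes (a # xs) u v \<longleftrightarrow> precedes (a # ys) u v"
        using Cons.prems(4) y \<open>a = b\<close> by simp
      ultimately show ?thesis unfolding precedes_Cons using precedes_in_set by metis
    qed
  qed
  ultimately show ?case using y by simp
qed

lemma precedes_swap_middle:
  assumes "distinct (A @ [p, q] @ C)"
  shows "precedes (A @ [q, p] @ C) u v \<longleftrightarrow>
    (precedes (A @ [p, q] @ C) u v \<and> \<not> (u = p \<and> v = q)) \<or> (u = q \<and> v = p)"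
  using assms precedes_in_set[of A u v] precedes_in_set[of C u v]
  by (auto simp: precedes_append precedes_Cons)

lemma precedes_swap:
  assumes "distinct x" "Suc i < length x"
  shows "precedes (x[i := x ! Suc i, Suc i := x ! i]) u v \<longleftrightarrow>
    (precedes x u v \<and> \<not> (u = x ! i \<and> v = x ! Suc i)) \<or> (u = x ! Suc i \<and> v = x ! i)"
proof -
  define A C where "A = take i x" and "C = drop (Suc (Suc i)) x"
  have x: "x = A @ [x ! i, x ! Suc i] @ C"
    unfolding A_def C_def using assms(2)
    by (metis Cons_nth_drop_Suc Suc_lessD append_Cons append_self_conv2 id_take_nth_drop)
  have "x[i := x ! Suc i, Suc i := x ! i] = A @ [x ! Suc i, x ! i] @ C"
    unfolding A_def C_def using assms(2)
    by (intro nth_equalityI) (auto simp: nth_append nth_list_update min_def nth_Cons' Suc_diff_Suc numeral_2_eq_2)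
  moreover have "distinct (A @ [x ! i, x ! Suc i] @ C)" using assms(1) x by metis
  ultimately show ?thesis using precedes_swap_middle x by metis
qed

definition inversions :: "'a::linorder list \<Rightarrow> ('a \<times> 'a) set" where
  "inversions x = {(a, b). a < b \<and> precedes x b a}"

lemma in_inversions_iff: "(u, v) \<in> inversions x \<longleftrightarrow> u < v \<and> precedes x v u"
  unfolding inversions_def by simp

lemma finite_inversions: "finite (inversions x)"
proof -
  have "inversions x \<subseteq> set x \<times> set x" unfolding inversions_def by (auto dest: precedes_in_set)
  then show ?thesis using finite_subset by blast
qed

lemma inversions_inj:
  assumes "distinct x" "distinct y" "set x = set y" "inversions x = inversions y"
  shows "x = y"
proof (rule list_eq_if_precedes_eq[OF assms(1-3)])
  fix u v
  show "precedes x u v \<longleftrightarrow> precedes y u v"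
  proof (cases "u \<in> set x \<and> v \<in> set x \<and> u \<noteq> v")
    case True
    then consider "v < u" | "u < v" using linorder_neqE by blast
    then show ?thesis
    proof cases
      case 1 then show ?thesis using assms(4) in_inversions_iff by metis
    next
      case 2
      then have "precedes x v u \<longleftrightarrow> precedes y v u" using assms(4) in_inversions_iff by metis
      then show ?thesis using True assms(1-3) precedes_iff_not_precedes by metis
    qed
  next
    case False
    then show ?thesis using assms(1-3) precedes_in_set precedes_irrefl by metis
  qed
qed

lemma inversions_swap:
  assumes "distinct x" "Suc i < length x" "x ! Suc i < x ! i"
  shows "inversions (x[i := x ! Suc i, Suc i := x ! i]) = inversions x - {(x ! Suc i, x ! i)}"
proof (rule set_eqI)
  fix w :: "'a \<times> 'a"
  obtain u v where w: "w = (u, v)" by (cases w)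
  have "u < v \<Longrightarrow> \<not> (v = x ! Suc i \<and> u = x ! i)" using assms(3) by auto
  then show "w \<in> inversions (x[i := x ! Suc i, Suc i := x ! i]) \<longleftrightarrow> w \<in> inversions x - {(x ! Suc i, x ! i)}"
    unfolding w in_inversions_iff Diff_iff singleton_iff precedes_swap[OF assms(1,2)] by blast
qed

lemma weak_le_imp_inversions_subset:
  assumes "weak_le y x" "distinct x"
  shows "inversions y \<subseteq> inversions x"
proof -
  have "weak_step\<^sup>*\<^sup>* x y" using assms(1) unfolding weak_le_def .
  then have "distinct y \<and> inversions y \<subseteq> inversions x"
  proof (induction rule: rtranclp_induct)
    case base
    then show ?case using assms(2) by simp
  next
    case (step y z)
    then obtain i where i: "Suc i < length y" "y ! Suc i < y ! i"
      "z = y[i := y ! Suc i, Suc i := y ! i]"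
      unfolding weak_step_def by blast
    then show ?case using step.IH inversions_swap[OF _ i(1,2)] by auto
  qed
  then show ?thesis ..
qed

lemma precedes_if_not_inversion:
  assumes "distinct x" "set y = set x" "inversions y \<subseteq> inversions x"
    and "precedes x u v" "u < v"
  shows "precedes y u v"
proof -
  have "\<not> precedes y v u"
  proof
    assume "precedes y v u"
    then have "(u, v) \<in> inversions y" using assms(5) by (simp add: in_inversions_iff)
    then have "(u, v) \<in> inversions x" using assms(3) by blast
    then have "precedes x v u" by (simp add: in_inversions_iff)
    then show False using precedes_asym[OF assms(1,4)] by contradiction
  qed
  moreover have "u \<in> set y" "v \<in> set y" using assms(2) precedes_in_set[OF assms(4)] by auto
  ultimately show ?thesis using precedes_total[of u y v] assms(5) by auto
qed

lemma inversion_split: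
  assumes "distinct x" "distinct y" "set y = set x" "inversions y \<subseteq> inversions x"
    and "precedes x b c" "precedes x c a" "a < b" "\<not> precedes y b a"
  shows "(c < b \<and> \<not> precedes y b c) \<or> (a < c \<and> \<not> precedes y c a)"
proof (rule ccontr)
  assume lost: "\<not> ?thesis"
  have "c \<noteq> b" "c \<noteq> a" using assms(1,5,6) precedes_irrefl by metis+
  then have "b < c \<or> c < b" "a < c \<or> c < a" by (auto simp: neq_iff)
  then have "precedes y b c" "precedes y c a"
    using lost precedes_if_not_inversion[OF assms(1,3,4,5)] precedes_if_not_inversion[OF assms(1,3,4,6)]
    by blast+
  then show False using assms(2,8) precedes_trans by metis
qed

lemma exists_adjacent_inversion_not_in:
  assumes "distinct x" "distinct y" "set y = set x" "inversions y \<subseteq> inversions x"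
    and "inversions y \<noteq> inversions x"
  obtains k where "Suc k < length x" "x ! Suc k < x ! k" "(x ! Suc k, x ! k) \<notin> inversions y"
proof -
  have "\<exists>k. Suc k < length x \<and> x ! Suc k < x ! k \<and> \<not> precedes y (x ! k) (x ! Suc k)"
    if "p < q" "q < length x" "x ! q < x ! p" "\<not> precedes y (x ! p) (x ! q)" for p q
    using that
  proof (induction "q - p" arbitrary: p q rule: less_induct)
    case less
    show ?case
    proof (cases "q = Suc p")
      case True
      then show ?thesis using less.prems by blast
    next
      case False
      let ?c = "x ! Suc p"
      have pq: "Suc p < q" using less.prems(1) False by simp
      have "precedes x (x ! p) ?c" "precedes x ?c (x ! q)"
        using precedes_nth_iff[OF assms(1)] pq less.prems(2) by auto
      from inversion_split[OF assms(1-4) this less.prems(3,4)]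
      show ?thesis
      proof
        assume "?c < x ! p \<and> \<not> precedes y (x ! p) ?c"
        then show ?thesis using pq less.prems(2) by (intro exI[of _ p]) simp
      next
        assume "x ! q < ?c \<and> \<not> precedes y ?c (x ! q)"
        moreover have "q - Suc p < q - p" using pq by simp
        ultimately show ?thesis using less.hyps pq less.prems(2) by blast
      qed
    qed
  qed
  moreover obtain u v where "(u, v) \<in> inversions x" "(u, v) \<notin> inversions y"
    using assms(4,5) by auto
  then obtain p q where "p < q" "q < length x" "x ! q < x ! p" "\<not> precedes y (x ! p) (x ! q)"
    unfolding in_inversions_iff precedes_def by blast
  ultimately show ?thesis using that in_inversions_iff by blast
qed

lemma weak_le_if_inversions_subset:
  "distinct x \<Longrightarrow> distinct y \<Longrightarrow> set y = set x \<Longrightarrow> inversions y \<subseteq> inversions x \<Longrightarrow> weak_le y x"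
proof (induction "card (inversions x)" arbitrary: x rule: less_induct)
  case less
  show ?case
  proof (cases "inversions y = inversions x")
    case True
    then have "y = x" using inversions_inj less.prems by metis
    then show ?thesis unfolding weak_le_def by simp
  next
    case False
    then obtain k where k: "Suc k < length x" "x ! Suc k < x ! k" "(x ! Suc k, x ! k) \<notin> inversions y"
      using exists_adjacent_inversion_not_in less.prems by metis
    define x' where "x' = x[k := x ! Suc k, Suc k := x ! k]"
    have step: "weak_step x x'" unfolding weak_step_def x'_def using k(1,2) by blast
    have inv: "inversions x' = inversions x - {(x ! Suc k, x ! k)}"
      unfolding x'_def using inversions_swap less.prems(1) k(1,2) by blast
    have mem: "(x ! Suc k, x ! k) \<in> inversions x"
      using k(1,2) precedes_nth_iff[OF less.prems(1), of k "Suc k"] in_inversions_iff by auto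
    have "weak_le y x'"
    proof (rule less.hyps)
      show "card (inversions x') < card (inversions x)"
        unfolding inv by (rule card_Diff1_less[OF finite_inversions mem])
      show "distinct x'" "set y = set x'" using less.prems k(1) by (simp_all add: x'_def)
      show "distinct y" by (rule less.prems(2))
      show "inversions y \<subseteq> inversions x'" unfolding inv using less.prems(4) k(3) by blast
    qed
    then show ?thesis unfolding weak_le_def using step by (rule converse_rtranclp_into_rtranclp[rotated])
  qed
qed

lemma weak_le_iff_inversions_subset:
  "distinct x \<Longrightarrow> distinct y \<Longrightarrow> set y = set x \<Longrightarrow> weak_le y x \<longleftrightarrow> inversions y \<subseteq> inversions x"
  using weak_le_imp_inversions_subset weak_le_if_inversions_subset by blast

lemma Av312D:
  assumes "x \<in> Av312 n"
  shows "distinct x" "length x = n" "set x = {1..n}"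
  using assms unfolding Av312_def perms_def by auto

lemma Av312_iff_precedes:
  "x \<in> Av312 n \<longleftrightarrow> x \<in> perms n \<and> \<not> (\<exists>a b c. a < b \<and> b < c \<and> precedes x c a \<and> precedes x a b)"
proof -
  have pattern: "(\<exists>i j k. i < j \<and> j < k \<and> k < n \<and> x ! j < x ! k \<and> x ! k < x ! i) \<longleftrightarrow>
      (\<exists>a b c. a < b \<and> b < c \<and> precedes x c a \<and> precedes x a b)" if "x \<in> perms n"
  proof
    assume "\<exists>i j k. i < j \<and> j < k \<and> k < n \<and> x ! j < x ! k \<and> x ! k < x ! i"
    then obtain i j k where ijk: "i < j" "j < k" "k < n" "x ! j < x ! k" "x ! k < x ! i" by blast
    have "length x = n" using that unfolding perms_def by simp
    then have "precedes x (x ! i) (x ! j)" "precedes x (x ! j) (x ! k)"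
      unfolding precedes_def using ijk by (metis less_trans)+
    then show "\<exists>a b c. a < b \<and> b < c \<and> precedes x c a \<and> precedes x a b" using ijk by blast
  next
    assume "\<exists>a b c. a < b \<and> b < c \<and> precedes x c a \<and> precedes x a b"
    then obtain a b c where abc: "a < b" "b < c" "precedes x c a" "precedes x a b" by blast
    from abc(3) obtain i j where ij: "i < j" "j < length x" "x ! i = c" "x ! j = a"
      unfolding precedes_def by blast
    from abc(4) obtain j' k where jk: "j' < k" "k < length x" "x ! j' = a" "x ! k = b"
      unfolding precedes_def by blast
    have "distinct x" "length x = n" using that unfolding perms_def by simp_all
    then have "j = j'" using nth_eq_iff_index_eq[of x j j'] ij jk by auto
    then show "\<exists>i j k. i < j \<and> j < k \<and> k < n \<and> x ! j < x ! k \<and> x ! k < x ! i"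
      using ij jk abc \<open>length x = n\<close> by (intro exI[of _ i] exI[of _ j] exI[of _ k]) auto
  qed
  show ?thesis unfolding Av312_def using pattern by blast
qed

lemma Av312_no_312:
  "x \<in> Av312 n \<Longrightarrow> a < b \<Longrightarrow> b < c \<Longrightarrow> precedes x c a \<Longrightarrow> precedes x a b \<Longrightarrow> False"
  unfolding Av312_iff_precedes by blast

definition reach :: "nat list \<Rightarrow> nat \<Rightarrow> nat" where
  "reach x a = Max (insert a {b. a < b \<and> precedes x b a})"

lemma finite_reach_candidates: "finite {b. a < b \<and> precedes x b a}"
proof -
  have "{b. a < b \<and> precedes x b a} \<subseteq> set x" by (auto dest: precedes_in_set)
  then show ?thesis using finite_subset by blast
qed

lemma reach_ge: "a \<le> reach x a"
  unfolding reach_def by (intro Max_ge) (simp_all add: finite_reach_candidates)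

lemma reach_ge_if_precedes: "a < b \<Longrightarrow> precedes x b a \<Longrightarrow> b \<le> reach x a"
  unfolding reach_def by (intro Max_ge) (simp_all add: finite_reach_candidates)

lemma reach_cases: "reach x a = a \<or> (a < reach x a \<and> precedes x (reach x a) a)"
proof -
  have "reach x a \<in> insert a {b. a < b \<and> precedes x b a}"
    unfolding reach_def using finite_reach_candidates by (intro Max_in) simp_all
  then show ?thesis by auto
qed

lemma reach_notin: "a \<notin> set x \<Longrightarrow> reach x a = a"
  using reach_cases[of x a] precedes_in_set[of x "reach x a" a] by auto

text \<open>Avoiding 312 is what makes the larger values preceding \<open>a\<close> an interval above \<open>a\<close>.\<close>
lemma precedes_iff_le_reach:
  assumes x: "x \<in> Av312 n" and "a < b"
  shows "precedes x b a \<longleftrightarrow> b \<le> reach x a"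
proof
  assume "precedes x b a"
  then show "b \<le> reach x a" using reach_ge_if_precedes assms(2) by blast
next
  assume b: "b \<le> reach x a"
  then have ra: "a < reach x a" "precedes x (reach x a) a" using reach_cases[of x a] assms(2) by auto
  then have "a \<in> set x" "reach x a \<in> set x" using precedes_in_set[OF ra(2)] by auto
  then have "b \<in> set x" using Av312D(3)[OF x] b assms(2) by auto
  show "precedes x b a"
  proof (rule ccontr)
    assume "\<not> precedes x b a"
    then have "precedes x a b"
      using precedes_total[OF \<open>a \<in> set x\<close> \<open>b \<in> set x\<close>] assms(2) by auto
    moreover have "b \<noteq> reach x a" using ra(2) \<open>\<not> precedes x b a\<close> by auto
    ultimately show False using Av312_no_312[OF x assms(2) _ ra(2)] b by simp
  qed
qed

lemma reach_nested:
  assumes x: "x \<in> Av312 n" and "a < b" "b \<le> reach x a"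
  shows "reach x b \<le> reach x a"
proof (cases "reach x b = b")
  case True
  then show ?thesis using assms by simp
next
  case False
  then have rb: "b < reach x b" "precedes x (reach x b) b" using reach_cases[of x b] by auto
  have "precedes x b a" using precedes_iff_le_reach[OF x] assms by blast
  then have "precedes x (reach x b) a" using precedes_trans[OF Av312D(1)[OF x] rb(2)] by blast
  then show ?thesis using reach_ge_if_precedes rb assms(2) by simp
qed

text \<open>Bracket vectors: the intervals \<open>[a, e a]\<close> are pairwise nested or disjoint. Ordered
  componentwise, they form the Tamari lattice; \<open>reach\<close> identifies them with \<open>Av312 n\<close>.\<close>
definition bracket_vector :: "nat \<Rightarrow> (nat \<Rightarrow> nat) \<Rightarrow> bool" where
  "bracket_vector n e \<longleftrightarrow> (\<forall>a. a \<le> e a) \<and> (\<forall>a. a \<le> n \<longrightarrow> e a \<le> n) \<and>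
     (\<forall>a. a = 0 \<or> n < a \<longrightarrow> e a = a) \<and> (\<forall>a b. a < b \<and> b \<le> e a \<longrightarrow> e b \<le> e a)"

lemma bracket_vector_ge: "bracket_vector n e \<Longrightarrow> a \<le> e a"
  unfolding bracket_vector_def by simp

lemma bracket_vector_le: "bracket_vector n e \<Longrightarrow> a \<le> n \<Longrightarrow> e a \<le> n"
  unfolding bracket_vector_def by simp

lemma bracket_vector_fixed: "bracket_vector n e \<Longrightarrow> a = 0 \<or> n < a \<Longrightarrow> e a = a"
  unfolding bracket_vector_def by (elim conjE) (drule spec[of _ a], simp)

lemma bracket_vector_nested: "bracket_vector n e \<Longrightarrow> a < b \<Longrightarrow> b \<le> e a \<Longrightarrow> e b \<le> e a"
  unfolding bracket_vector_def by simp

lemma bracket_vector_reach: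
  assumes x: "x \<in> Av312 n"
  shows "bracket_vector n (reach x)"
  unfolding bracket_vector_def
proof (intro conjI allI impI)
  fix a
  show "a \<le> reach x a" by (rule reach_ge)
  show "a = 0 \<or> n < a \<Longrightarrow> reach x a = a" using reach_notin Av312D(3)[OF x] by auto
  show "reach x a \<le> n" if "a \<le> n"
  proof (cases "reach x a = a")
    case False
    then have "reach x a \<in> set x" using reach_cases[of x a] precedes_in_set by metis
    then show ?thesis using Av312D(3)[OF x] by simp
  qed (use that in simp)
next
  fix a b
  assume "a < b \<and> b \<le> reach x a"
  then show "reach x b \<le> reach x a" using reach_nested[OF x] by simp
qed

text \<open>The inverse of \<open>reach\<close> on \<open>[lo, hi]\<close>: the values in \<open>(lo, e lo]\<close>, then \<open>lo\<close>, then the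
  values in \<open>(e lo, hi]\<close>. Clamping \<open>e lo\<close> into \<open>[lo, hi]\<close> only serves termination.\<close>
function perm_of_bv :: "(nat \<Rightarrow> nat) \<Rightarrow> nat \<Rightarrow> nat \<Rightarrow> nat list" where
  "perm_of_bv e lo hi = (if hi < lo then [] else
     perm_of_bv e (Suc lo) (min (max (e lo) lo) hi) @ lo # perm_of_bv e (Suc (min (max (e lo) lo) hi)) hi)"
  by pat_completeness auto
termination by (relation "measure (\<lambda>(e, lo, hi). Suc hi - lo)") auto

declare perm_of_bv.simps [simp del]

lemma set_perm_of_bv: "set (perm_of_bv e lo hi) = {lo..hi}"
proof (induction e lo hi rule: perm_of_bv.induct)
  case (1 e lo hi)
  show ?case
  proof (cases "hi < lo")
    case True
    then show ?thesis by (subst perm_of_bv.simps) auto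
  next
    case False
    let ?m = "min (max (e lo) lo) hi"
    have "set (perm_of_bv e lo hi) = {Suc lo..?m} \<union> {lo} \<union> {Suc ?m..hi}"
      using 1 False by (subst perm_of_bv.simps) auto
    also have "\<dots> = {lo..hi}" using False by auto
    finally show ?thesis .
  qed
qed

lemma distinct_perm_of_bv: "distinct (perm_of_bv e lo hi)"
proof (induction e lo hi rule: perm_of_bv.induct)
  case (1 e lo hi)
  then show ?case by (subst perm_of_bv.simps) (auto simp: set_perm_of_bv)
qed

definition bracket_vector_on :: "(nat \<Rightarrow> nat) \<Rightarrow> nat \<Rightarrow> nat \<Rightarrow> bool" where
  "bracket_vector_on e lo hi \<longleftrightarrow>
     (\<forall>a. lo \<le> a \<and> a \<le> hi \<longrightarrow> a \<le> e a \<and> e a \<le> hi \<and> (\<forall>b. a < b \<and> b \<le> e a \<longrightarrow> e b \<le> e a))"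

lemma precedes_perm_of_bv:
  "bracket_vector_on e lo hi \<Longrightarrow> precedes (perm_of_bv e lo hi) u v \<longleftrightarrow>
     (lo \<le> u \<and> u \<le> hi \<and> lo \<le> v \<and> v \<le> hi \<and> ((v < u \<and> u \<le> e v) \<or> (u < v \<and> e u < v)))"
proof (induction e lo hi arbitrary: u v rule: perm_of_bv.induct)
  case (1 e lo hi)
  show ?case
  proof (cases "hi < lo")
    case True
    then show ?thesis by (subst perm_of_bv.simps) auto
  next
    case False
    have P: "\<And>a. lo \<le> a \<Longrightarrow> a \<le> hi \<Longrightarrow> a \<le> e a \<and> e a \<le> hi \<and> (\<forall>b. a < b \<and> b \<le> e a \<longrightarrow> e b \<le> e a)"
      using "1.prems" unfolding bracket_vector_on_def by blast
    then have lo: "lo \<le> e lo" "e lo \<le> hi" "\<And>b. lo < b \<Longrightarrow> b \<le> e lo \<Longrightarrow> e b \<le> e lo"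
      using False by auto
    then have m: "min (max (e lo) lo) hi = e lo" by simp
    have "bracket_vector_on e (Suc lo) (e lo)"
      unfolding bracket_vector_on_def
    proof (intro allI impI)
      fix a
      assume "Suc lo \<le> a \<and> a \<le> e lo"
      then show "a \<le> e a \<and> e a \<le> e lo \<and> (\<forall>b. a < b \<and> b \<le> e a \<longrightarrow> e b \<le> e a)"
        using P[of a] lo by auto
    qed
    moreover have "bracket_vector_on e (Suc (e lo)) hi"
      unfolding bracket_vector_on_def using P lo(1) by auto
    ultimately have IH: "\<And>u v. precedes (perm_of_bv e (Suc lo) (e lo)) u v \<longleftrightarrow>
        (Suc lo \<le> u \<and> u \<le> e lo \<and> Suc lo \<le> v \<and> v \<le> e lo \<and> ((v < u \<and> u \<le> e v) \<or> (u < v \<and> e u < v)))"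
      "\<And>u v. precedes (perm_of_bv e (Suc (e lo)) hi) u v \<longleftrightarrow>
        (Suc (e lo) \<le> u \<and> u \<le> hi \<and> Suc (e lo) \<le> v \<and> v \<le> hi \<and> ((v < u \<and> u \<le> e v) \<or> (u < v \<and> e u < v)))"
      using "1.IH"[OF False] m by simp_all
    have unfold: "perm_of_bv e lo hi = perm_of_bv e (Suc lo) (e lo) @ lo # perm_of_bv e (Suc (e lo)) hi"
      using False m by (subst perm_of_bv.simps) simp
    have split: "precedes (perm_of_bv e lo hi) u v \<longleftrightarrow>
      (Suc lo \<le> u \<and> u \<le> e lo \<and> Suc lo \<le> v \<and> v \<le> e lo \<and> ((v < u \<and> u \<le> e v) \<or> (u < v \<and> e u < v)))
      \<or> (u = lo \<and> Suc (e lo) \<le> v \<and> v \<le> hi)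
      \<or> (Suc (e lo) \<le> u \<and> u \<le> hi \<and> Suc (e lo) \<le> v \<and> v \<le> hi \<and> ((v < u \<and> u \<le> e v) \<or> (u < v \<and> e u < v)))
      \<or> (Suc lo \<le> u \<and> u \<le> e lo \<and> (v = lo \<or> (Suc (e lo) \<le> v \<and> v \<le> hi)))"
      unfolding unfold precedes_append precedes_Cons IH set_perm_of_bv list.set atLeastAtMost_iff insert_iff
      by blast
    have inner: "Suc lo \<le> w \<Longrightarrow> w \<le> e lo \<Longrightarrow> e w \<le> e lo" for w using lo(3) by auto
    show ?thesis
      unfolding split using lo(1,2) inner[of u] inner[of v] P[of u] P[of v]
      by (cases "u = lo"; cases "v = lo"; cases "u \<le> e lo"; cases "v \<le> e lo") auto
  qed
qed

lemma bracket_vector_on_interval: "bracket_vector n e \<Longrightarrow> bracket_vector_on e 1 n"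
  unfolding bracket_vector_def bracket_vector_on_def by blast

lemma perm_of_bv_Av312:
  assumes e: "bracket_vector n e"
  shows "perm_of_bv e 1 n \<in> Av312 n"
  unfolding Av312_iff_precedes
proof (intro conjI notI)
  let ?x = "perm_of_bv e 1 n"
  show "?x \<in> perms n"
    unfolding perms_def using set_perm_of_bv[of e 1 n] distinct_perm_of_bv[of e 1 n] distinct_card[of ?x]
    by auto
  assume "\<exists>a b c. a < b \<and> b < c \<and> precedes ?x c a \<and> precedes ?x a b"
  then obtain a b c where abc: "a < b" "b < c" "precedes ?x c a" "precedes ?x a b" by blast
  note prec = precedes_perm_of_bv[OF bracket_vector_on_interval[OF e]]
  have "precedes ?x b a" using prec[of c a] prec[of b a] abc(1-3) by auto
  then show False using precedes_asym[OF distinct_perm_of_bv abc(4)] by blast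
qed

lemma reach_perm_of_bv:
  assumes e: "bracket_vector n e"
  shows "reach (perm_of_bv e 1 n) = e"
proof
  fix a
  let ?x = "perm_of_bv e 1 n"
  note prec = precedes_perm_of_bv[OF bracket_vector_on_interval[OF e]]
  show "reach ?x a = e a"
  proof (rule antisym)
    show "reach ?x a \<le> e a"
      using reach_cases[of ?x a] prec[of "reach ?x a" a] bracket_vector_ge[OF e, of a] by auto
  next
    show "e a \<le> reach ?x a"
    proof (cases "e a = a")
      case True
      then show ?thesis using reach_ge[of a ?x] by simp
    next
      case False
      then have "a < e a" "1 \<le> a" "a \<le> n"
        using bracket_vector_ge[OF e, of a] bracket_vector_fixed[OF e, of a] by force+
      then have "precedes ?x (e a) a" using prec[of "e a" a] bracket_vector_le[OF e, of a] by simp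
      then show ?thesis using reach_ge_if_precedes \<open>a < e a\<close> by blast
    qed
  qed
qed

lemma inversions_subset_iff_reach_le:
  assumes x: "x \<in> Av312 n" and y: "y \<in> Av312 n"
  shows "inversions y \<subseteq> inversions x \<longleftrightarrow> (\<forall>a. reach y a \<le> reach x a)"
proof
  assume sub: "inversions y \<subseteq> inversions x"
  show "\<forall>a. reach y a \<le> reach x a"
  proof
    fix a
    show "reach y a \<le> reach x a"
    proof (cases "reach y a = a")
      case True
      then show ?thesis using reach_ge[of a x] by simp
    next
      case False
      then have "(a, reach y a) \<in> inversions y" using reach_cases[of y a] in_inversions_iff by auto
      then have "(a, reach y a) \<in> inversions x" using sub by blast
      then show ?thesis using reach_ge_if_precedes in_inversions_iff by blast
    qed
  qed
next
  assume le: "\<forall>a. reach y a \<le> reach x a"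
  show "inversions y \<subseteq> inversions x"
  proof (clarsimp simp: in_inversions_iff)
    fix a b
    assume "a < b" "precedes y b a"
    then have "b \<le> reach x a" using precedes_iff_le_reach[OF y] le le_trans by blast
    then show "precedes x b a" using precedes_iff_le_reach[OF x \<open>a < b\<close>] by blast
  qed
qed

lemma weak_le_Av312_iff:
  assumes "x \<in> Av312 n" "y \<in> Av312 n"
  shows "weak_le y x \<longleftrightarrow> (\<forall>a. reach y a \<le> reach x a)"
  using weak_le_iff_inversions_subset[OF Av312D(1)[OF assms(1)] Av312D(1)[OF assms(2)]]
    inversions_subset_iff_reach_le[OF assms] Av312D(3)[OF assms(1)] Av312D(3)[OF assms(2)]
  by simp

lemma reach_inj:
  assumes x: "x \<in> Av312 n" and y: "y \<in> Av312 n" and "reach x = reach y"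
  shows "x = y"
proof (rule inversions_inj)
  show "inversions x = inversions y"
    using inversions_subset_iff_reach_le[OF x y] inversions_subset_iff_reach_le[OF y x] assms(3)
    by simp
qed (use Av312D[OF x] Av312D[OF y] in simp_all)

lemma perm_of_bv_reach: "x \<in> Av312 n \<Longrightarrow> perm_of_bv (reach x) 1 n = x"
  using reach_inj perm_of_bv_Av312 reach_perm_of_bv bracket_vector_reach by metis

lemma weak_le_antisym_Av312:
  assumes "x \<in> Av312 n" "y \<in> Av312 n" "weak_le x y" "weak_le y x"
  shows "x = y"
proof (rule reach_inj[OF assms(1,2)])
  show "reach x = reach y"
    using assms weak_le_Av312_iff[OF assms(1,2)] weak_le_Av312_iff[OF assms(2,1)] by (simp add: antisym fun_eq_iff)
qed

definition bv_closed :: "(nat \<Rightarrow> nat) \<Rightarrow> nat \<Rightarrow> nat \<Rightarrow> bool" where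
  "bv_closed e a m \<longleftrightarrow> (\<forall>b. a < b \<and> b \<le> m \<longrightarrow> e b \<le> m)"

text \<open>Lowering the single entry \<open>e a\<close> to \<open>pop_bv e a\<close> gives the lower cover of \<open>e\<close> in
  direction \<open>a\<close>; \<open>Pop\<close> lowers all entries at once.\<close>
definition pop_bv :: "(nat \<Rightarrow> nat) \<Rightarrow> nat \<Rightarrow> nat" where
  "pop_bv e a = (if e a = a then a else Max {m. a \<le> m \<and> m < e a \<and> bv_closed e a m})"

lemma finite_pop_bv_candidates: "finite {m. a \<le> m \<and> m < e a \<and> bv_closed e a m}"
  by (rule finite_subset[of _ "{..<e a}"]) auto

lemma pop_bv_mem:
  assumes "a < e a"
  shows "a \<le> pop_bv e a" "pop_bv e a < e a" "bv_closed e a (pop_bv e a)"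
proof -
  have "a \<in> {m. a \<le> m \<and> m < e a \<and> bv_closed e a m}" using assms unfolding bv_closed_def by auto
  then have "pop_bv e a \<in> {m. a \<le> m \<and> m < e a \<and> bv_closed e a m}"
    unfolding pop_bv_def using assms finite_pop_bv_candidates Max_in by (metis empty_iff less_irrefl)
  then show "a \<le> pop_bv e a" "pop_bv e a < e a" "bv_closed e a (pop_bv e a)" by simp_all
qed

lemma pop_bv_fixed: "e a = a \<Longrightarrow> pop_bv e a = a"
  unfolding pop_bv_def by simp

lemma pop_bv_greatest: "a \<le> m \<Longrightarrow> m < e a \<Longrightarrow> bv_closed e a m \<Longrightarrow> m \<le> pop_bv e a"
  unfolding pop_bv_def using finite_pop_bv_candidates by (auto intro: Max_ge)

lemma pop_bv_ge: "a \<le> e a \<Longrightarrow> a \<le> pop_bv e a"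
  using pop_bv_mem pop_bv_fixed by (metis le_neq_implies_less order_refl)

lemma pop_bv_le: "a \<le> e a \<Longrightarrow> pop_bv e a \<le> e a"
  using pop_bv_mem pop_bv_fixed by (metis le_neq_implies_less order_less_imp_le)

lemma bv_closed_pop_bv: "a \<le> e a \<Longrightarrow> bv_closed e a (pop_bv e a)"
  using pop_bv_mem pop_bv_fixed unfolding bv_closed_def by (metis le_neq_implies_less not_le)

lemma bracket_vector_pop_bv:
  assumes e: "bracket_vector n e"
  shows "bracket_vector n (pop_bv e)"
  unfolding bracket_vector_def
proof (intro conjI allI impI)
  fix a
  show "a \<le> pop_bv e a" using pop_bv_ge[of a e] bracket_vector_ge[OF e] by blast
  show "a \<le> n \<Longrightarrow> pop_bv e a \<le> n"
    using pop_bv_le[of a e, OF bracket_vector_ge[OF e]] bracket_vector_le[OF e, of a] by (meson le_trans)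
  show "a = 0 \<or> n < a \<Longrightarrow> pop_bv e a = a" using pop_bv_fixed bracket_vector_fixed[OF e] by metis
next
  fix a b
  assume ab: "a < b \<and> b \<le> pop_bv e a"
  then have "e b \<le> pop_bv e a"
    using bv_closed_pop_bv[of a e, OF bracket_vector_ge[OF e]] unfolding bv_closed_def by blast
  then show "pop_bv e b \<le> pop_bv e a" using pop_bv_le[of b e, OF bracket_vector_ge[OF e]] by linarith
qed

lemma bracket_vector_lower:
  assumes e: "bracket_vector n e" and "e a \<noteq> a"
  shows "bracket_vector n (e(a := pop_bv e a))"
proof -
  have "a < e a" using bracket_vector_ge[OF e, of a] assms(2) by simp
  note pop = pop_bv_mem[of a e, OF this]
  have "a \<noteq> 0" "a \<le> n" using assms(2) bracket_vector_fixed[OF e, of a] by force+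
  show ?thesis
    unfolding bracket_vector_def
  proof (intro conjI allI impI)
    fix b
    show "b \<le> (e(a := pop_bv e a)) b" using pop bracket_vector_ge[OF e, of b] by simp
    show "b \<le> n \<Longrightarrow> (e(a := pop_bv e a)) b \<le> n"
      using pop bracket_vector_le[OF e] \<open>a \<le> n\<close> by fastforce
    show "b = 0 \<or> n < b \<Longrightarrow> (e(a := pop_bv e a)) b = b"
      using bracket_vector_fixed[OF e, of b] \<open>a \<noteq> 0\<close> \<open>a \<le> n\<close> by auto
  next
    fix b c
    assume bc: "b < c \<and> c \<le> (e(a := pop_bv e a)) b"
    show "(e(a := pop_bv e a)) c \<le> (e(a := pop_bv e a)) b"
    proof (cases "b = a")
      case True
      then show ?thesis using pop(3) bc unfolding bv_closed_def by (auto simp: less_imp_le)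
    next
      case False
      then have "e c \<le> e b" using bracket_vector_nested[OF e] bc by simp
      then show ?thesis using False pop(2) by auto
    qed
  qed
qed

lemma covers_lower_bv:
  assumes x: "x \<in> Av312 n" and a: "reach x a \<noteq> a"
  shows "covers_in (Av312 n) weak_le (perm_of_bv ((reach x)(a := pop_bv (reach x) a)) 1 n) x"
proof -
  let ?e = "reach x"
  let ?e' = "?e(a := pop_bv ?e a)"
  let ?w = "perm_of_bv ?e' 1 n"
  have e': "bracket_vector n ?e'" using bracket_vector_lower[OF bracket_vector_reach[OF x] a] .
  have w: "?w \<in> Av312 n" using perm_of_bv_Av312[OF e'] .
  have reach_w: "reach ?w = ?e'" using reach_perm_of_bv[OF e'] .
  have less: "pop_bv ?e a < ?e a" using pop_bv_mem(2) reach_ge[of a x] a by (metis le_neq_implies_less)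
  have "weak_le ?w x" using weak_le_Av312_iff[OF x w] reach_w less by simp
  moreover have "?w \<noteq> x" using reach_w less by (metis fun_upd_same less_irrefl)
  moreover have "\<not> (\<exists>z\<in>Av312 n. weak_le ?w z \<and> weak_le z x \<and> z \<noteq> ?w \<and> z \<noteq> x)"
  proof
    assume "\<exists>z\<in>Av312 n. weak_le ?w z \<and> weak_le z x \<and> z \<noteq> ?w \<and> z \<noteq> x"
    then obtain z where z: "z \<in> Av312 n" "weak_le ?w z" "weak_le z x" "z \<noteq> ?w" "z \<noteq> x" by blast
    have lo: "?e' b \<le> reach z b" for b using z(2) weak_le_Av312_iff[OF z(1) w] reach_w by simp
    have hi: "reach z b \<le> ?e b" for b using z(3) weak_le_Av312_iff[OF x z(1)] by simp
    have same: "reach z b = ?e b" if "b \<noteq> a" for b using lo[of b] hi[of b] that by simp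
    show False
    proof (cases "reach z a < ?e a")
      case True
      have "bv_closed ?e a (reach z a)"
        unfolding bv_closed_def
      proof (intro allI impI)
        fix c
        assume "a < c \<and> c \<le> reach z a"
        then show "?e c \<le> reach z a" using reach_nested[OF z(1), of a c] same[of c] by simp
      qed
      then have "reach z a \<le> pop_bv ?e a" using pop_bv_greatest reach_ge True by blast
      then have "reach z = reach ?w" using lo[of a] same reach_w by (auto simp: fun_eq_iff)
      then show False using reach_inj[OF z(1) w] z(4) by blast
    next
      case False
      then have "reach z = ?e" using hi[of a] same by (metis antisym not_le fun_eq_iff)
      then show False using reach_inj[OF z(1) x] z(5) by blast
    qed
  qed
  ultimately show ?thesis unfolding covers_in_def using w x by blast
qed

lemma lower_cover_reach:
  assumes x: "x \<in> Av312 n" and cover: "covers_in (Av312 n) weak_le y x"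
  obtains a where "reach x a \<noteq> a" "reach y = (reach x)(a := pop_bv (reach x) a)"
proof -
  have y: "y \<in> Av312 n" "weak_le y x" "y \<noteq> x" using cover unfolding covers_in_def by blast+
  have le: "reach y b \<le> reach x b" for b using weak_le_Av312_iff[OF x y(1)] y(2) by blast
  let ?D = "{a. reach y a < reach x a}"
  have "?D \<subseteq> {..n}"
  proof
    fix b
    assume "b \<in> ?D"
    then show "b \<in> {..n}"
      using bracket_vector_fixed[OF bracket_vector_reach[OF x], of b]
        bracket_vector_fixed[OF bracket_vector_reach[OF y(1)], of b]
      by (cases "n < b") auto
  qed
  then have fin: "finite ?D" using finite_subset by blast
  have "?D \<noteq> {}"
  proof
    assume "?D = {}"
    then have "reach y = reach x" using le by (auto simp: fun_eq_iff le_less)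
    then show False using reach_inj[OF y(1) x] y(3) by blast
  qed
  define a where "a = Max ?D"
  have "a \<in> ?D" unfolding a_def using fin \<open>?D \<noteq> {}\<close> by (rule Max_in)
  have above: "reach y b = reach x b" if "a < b" for b
    using Max_ge[OF fin, of b] le[of b] that unfolding a_def by fastforce
  have ne: "reach x a \<noteq> a" using \<open>a \<in> ?D\<close> reach_ge[of a y] by simp
  have "bv_closed (reach x) a (reach y a)"
    unfolding bv_closed_def
  proof (intro allI impI)
    fix c
    assume "a < c \<and> c \<le> reach y a"
    then show "reach x c \<le> reach y a" using reach_nested[OF y(1), of a c] above[of c] by simp
  qed
  then have pop: "reach y a \<le> pop_bv (reach x) a"
    using pop_bv_greatest reach_ge \<open>a \<in> ?D\<close> by blast
  let ?e' = "(reach x)(a := pop_bv (reach x) a)"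
  let ?w = "perm_of_bv ?e' 1 n"
  have e': "bracket_vector n ?e'" using bracket_vector_lower[OF bracket_vector_reach[OF x] ne] .
  have w: "?w \<in> Av312 n" using perm_of_bv_Av312[OF e'] .
  have reach_w: "reach ?w = ?e'" using reach_perm_of_bv[OF e'] .
  have "weak_le y ?w" using weak_le_Av312_iff[OF w y(1)] reach_w le pop by simp
  moreover have "weak_le ?w x" "?w \<noteq> x" using covers_lower_bv[OF x ne] unfolding covers_in_def by blast+
  ultimately have "y = ?w" using cover w unfolding covers_in_def by blast
  then show ?thesis using that ne reach_w by simp
qed

lemma reach_le_pop_bv_if_below_covers:
  assumes x: "x \<in> Av312 n" and m: "m \<in> Av312 n" and "weak_le m x"
    and below: "\<And>y. covers_in (Av312 n) weak_le y x \<Longrightarrow> weak_le m y"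
  shows "reach m b \<le> pop_bv (reach x) b"
proof (cases "reach x b = b")
  case True
  then show ?thesis using weak_le_Av312_iff[OF x m] \<open>weak_le m x\<close> pop_bv_fixed by metis
next
  case False
  let ?e' = "(reach x)(b := pop_bv (reach x) b)"
  let ?w = "perm_of_bv ?e' 1 n"
  have e': "bracket_vector n ?e'" using bracket_vector_lower[OF bracket_vector_reach[OF x] False] .
  have "covers_in (Av312 n) weak_le ?w x" using covers_lower_bv[OF x False] .
  then have "?w \<in> Av312 n" "weak_le m ?w" using below unfolding covers_in_def by blast+
  then have "reach m b \<le> reach ?w b" using weak_le_Av312_iff[OF _ m] by blast
  then show ?thesis using reach_perm_of_bv[OF e'] by simp
qed

lemma meet_in_eqI:
  assumes "\<And>u v. u \<in> M \<Longrightarrow> v \<in> M \<Longrightarrow> le u v \<Longrightarrow> le v u \<Longrightarrow> u = v" and "is_meet_in M le S m"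
  shows "meet_in M le S = m"
  unfolding meet_in_def
proof (rule the_equality)
  show "is_meet_in M le S m" by fact
  show "m' = m" if "is_meet_in M le S m'" for m'
    using that assms unfolding is_meet_in_def by meson
qed

lemma Pop_Av312:
  assumes x: "x \<in> Av312 n"
  shows "Pop (Av312 n) weak_le x = perm_of_bv (pop_bv (reach x)) 1 n"
proof -
  let ?M = "Av312 n"
  let ?S = "{y \<in> ?M. covers_in ?M weak_le y x} \<union> {x}"
  let ?P = "perm_of_bv (pop_bv (reach x)) 1 n"
  have e: "bracket_vector n (pop_bv (reach x))"
    using bracket_vector_pop_bv[OF bracket_vector_reach[OF x]] .
  have P: "?P \<in> ?M" using perm_of_bv_Av312[OF e] .
  have reach_P: "reach ?P = pop_bv (reach x)" using reach_perm_of_bv[OF e] .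
  have pop_le: "pop_bv (reach x) b \<le> reach x b" for b using pop_bv_le reach_ge by blast
  have "is_meet_in ?M weak_le ?S ?P"
    unfolding is_meet_in_def
  proof (intro conjI ballI impI)
    show "?P \<in> ?M" by (rule P)
  next
    fix s
    assume "s \<in> ?S"
    then consider "s = x" | "s \<in> ?M" "covers_in ?M weak_le s x" by blast
    then show "weak_le ?P s"
    proof cases
      case 1
      then show ?thesis using weak_le_Av312_iff[OF x P] reach_P pop_le by simp
    next
      case 2
      then obtain a where "reach s = (reach x)(a := pop_bv (reach x) a)"
        using lower_cover_reach[OF x] by blast
      then show ?thesis using weak_le_Av312_iff[OF 2(1) P] reach_P pop_le by simp
    qed
  next
    fix m
    assume m: "m \<in> ?M" and lower: "\<forall>s\<in>?S. weak_le m s"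
    have "weak_le m x" "\<And>y. covers_in ?M weak_le y x \<Longrightarrow> weak_le m y"
      using lower unfolding covers_in_def by simp_all
    then have "reach m b \<le> pop_bv (reach x) b" for b
      by (rule reach_le_pop_bv_if_below_covers[OF x m])
    then show "weak_le m ?P" using weak_le_Av312_iff[OF P m] reach_P by simp
  qed
  then show ?thesis unfolding Pop_def using weak_le_antisym_Av312 by (blast intro: meet_in_eqI)
qed

lemma pop_bv_below_top:
  assumes e: "bracket_vector n e" and "a < n"
  shows "pop_bv e a < n"
proof (cases "e a = a")
  case True
  then show ?thesis using pop_bv_fixed assms(2) by simp
next
  case False
  then have "a < e a" using bracket_vector_ge[OF e, of a] by simp
  then show ?thesis using pop_bv_mem(2) bracket_vector_le[OF e, of a] assms(2) by fastforce
qed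

lemma pop_bv_no_shared_end:
  assumes e: "bracket_vector n e" and "a < b" "b < pop_bv e a"
  shows "pop_bv e b \<noteq> pop_bv e a"
proof -
  have "e b \<le> pop_bv e a"
    using bv_closed_pop_bv[of a e, OF bracket_vector_ge[OF e]] assms(2,3) unfolding bv_closed_def by simp
  moreover have "pop_bv e b < e b \<or> pop_bv e b = b"
    using pop_bv_mem(2)[of b e] pop_bv_fixed[of e b] bracket_vector_ge[OF e, of b] by fastforce
  ultimately show ?thesis using assms(3) by auto
qed

text \<open>Closing each
  bracket of \<open>t\<close> off at the end of this chain yields a preimage of \<open>t\<close> under \<open>pop_bv\<close>.\<close>
function chain_end :: "(nat \<Rightarrow> nat) \<Rightarrow> nat \<Rightarrow> nat \<Rightarrow> nat" where
  "chain_end t n a = (if a < t a \<and> t a < n then chain_end t n (Suc (t a)) else a)"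
  by pat_completeness auto
termination by (relation "measure (\<lambda>(t, n, a). n - a)") auto

declare chain_end.simps [simp del]

lemma chain_end_ge: "a \<le> chain_end t n a"
proof (induction t n a rule: chain_end.induct)
  case (1 t n a)
  then show ?case by (subst chain_end.simps) (auto intro: Suc_leD le_trans)
qed

lemma chain_end_le: "a \<le> n \<Longrightarrow> chain_end t n a \<le> n"
proof (induction t n a rule: chain_end.induct)
  case (1 t n a)
  then show ?case by (subst chain_end.simps) auto
qed

locale pop_target =
  fixes n :: nat and t :: "nat \<Rightarrow> nat"
  assumes bracket_vector: "bracket_vector n t"
    and below_top: "\<And>a. a < n \<Longrightarrow> t a < n"
    and no_shared_end: "\<And>a b. a < b \<Longrightarrow> b < t a \<Longrightarrow> t b \<noteq> t a"
begin

lemma open_below_top: "a < t a \<Longrightarrow> t a < n"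
  using bracket_vector_fixed[OF bracket_vector, of a] bracket_vector_le[OF bracket_vector, of n]
    below_top[of a] by (metis le_neq_implies_less linorder_not_le nat_neq_iff)

lemma chain_end_fixed: "t a = a \<Longrightarrow> chain_end t n a = a"
  by (subst chain_end.simps) simp

lemma chain_end_step: "a < t a \<Longrightarrow> chain_end t n a = chain_end t n (Suc (t a))"
  using open_below_top by (subst chain_end.simps) simp

lemma chain_end_within: "a < t a \<Longrightarrow> a < b \<Longrightarrow> b \<le> t a \<Longrightarrow> chain_end t n b \<le> t a"
proof (induction "t a - b" arbitrary: b rule: less_induct)
  case less
  show ?case
  proof (cases "t b = b")
    case True
    then show ?thesis using chain_end_fixed less.prems by simp
  next
    case False
    then have "b < t b" using bracket_vector_ge[OF bracket_vector, of b] by simp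
    moreover have "t b \<le> t a" using bracket_vector_nested[OF bracket_vector] less.prems by simp
    ultimately have "t b < t a" using no_shared_end[of a b] less.prems by fastforce
    then have "chain_end t n (Suc (t b)) \<le> t a"
      using less.hyps[of "Suc (t b)"] less.prems \<open>b < t b\<close> by simp
    then show ?thesis using chain_end_step[OF \<open>b < t b\<close>] by simp
  qed
qed

lemma chain_end_nested: "a < b \<Longrightarrow> b \<le> chain_end t n a \<Longrightarrow> chain_end t n b \<le> chain_end t n a"
proof (induction "n - a" arbitrary: a rule: less_induct)
  case less
  show ?case
  proof (cases "a < t a")
    case False
    then have "t a = a" using bracket_vector_ge[OF bracket_vector, of a] by simp
    then show ?thesis using chain_end_fixed less.prems by simp
  next
    case True
    let ?c = "Suc (t a)"
    have step: "chain_end t n a = chain_end t n ?c" using chain_end_step[OF True] .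
    consider "b \<le> t a" | "b = ?c" | "?c < b" by linarith
    then show ?thesis
    proof cases
      case 1
      then show ?thesis using chain_end_within[OF True less.prems(1)] chain_end_ge[of ?c t n] step by simp
    next
      case 2
      then show ?thesis using step by simp
    next
      case 3
      have "n - ?c < n - a" using open_below_top[OF True] True by simp
      then show ?thesis using less.hyps 3 less.prems step by simp
    qed
  qed
qed

lemma bracket_vector_chain_end: "bracket_vector n (chain_end t n)"
  unfolding bracket_vector_def
proof (intro conjI allI impI)
  fix a
  show "a \<le> chain_end t n a" by (rule chain_end_ge)
  show "a \<le> n \<Longrightarrow> chain_end t n a \<le> n" by (rule chain_end_le)
  show "a = 0 \<or> n < a \<Longrightarrow> chain_end t n a = a"
    using chain_end_fixed bracket_vector_fixed[OF bracket_vector, of a] by simp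
next
  fix a b
  assume "a < b \<and> b \<le> chain_end t n a"
  then show "chain_end t n b \<le> chain_end t n a" using chain_end_nested by blast
qed

lemma pop_bv_chain_end: "pop_bv (chain_end t n) = t"
proof
  fix a
  show "pop_bv (chain_end t n) a = t a"
  proof (cases "a < t a")
    case False
    then have "t a = a" using bracket_vector_ge[OF bracket_vector, of a] by simp
    then show ?thesis using chain_end_fixed pop_bv_fixed by simp
  next
    case True
    let ?f = "chain_end t n"
    have end_eq: "?f a = ?f (Suc (t a))" using chain_end_step[OF True] .
    then have "t a < ?f a" using chain_end_ge[of "Suc (t a)" t n] by simp
    moreover have "bv_closed ?f a (t a)" unfolding bv_closed_def using chain_end_within[OF True] by blast
    ultimately have "t a \<le> pop_bv ?f a" using pop_bv_greatest True by simp
    moreover have "pop_bv ?f a \<le> t a"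
    proof (rule ccontr)
      assume "\<not> pop_bv ?f a \<le> t a"
      then have "?f (Suc (t a)) \<le> pop_bv ?f a"
        using pop_bv_mem(3)[of a ?f] \<open>t a < ?f a\<close> True unfolding bv_closed_def by simp
      then show False using pop_bv_mem(2)[of a ?f] \<open>t a < ?f a\<close> True end_eq by simp
    qed
    ultimately show ?thesis by simp
  qed
qed

end

lemma Pop_image_Av312_iff:
  assumes x: "x \<in> Av312 n"
  shows "x \<in> Pop (Av312 n) weak_le ` Av312 n \<longleftrightarrow>
    (\<forall>a<n. reach x a < n) \<and> \<not> (\<exists>a b. a < b \<and> b < reach x a \<and> reach x b = reach x a)"
proof
  assume "x \<in> Pop (Av312 n) weak_le ` Av312 n"
  then obtain z where z: "z \<in> Av312 n" "x = Pop (Av312 n) weak_le z" by blast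
  have e: "bracket_vector n (reach z)" using bracket_vector_reach[OF z(1)] .
  have "reach x = pop_bv (reach z)"
    using z(2) Pop_Av312[OF z(1)] reach_perm_of_bv[OF bracket_vector_pop_bv[OF e]] by simp
  then show "(\<forall>a<n. reach x a < n) \<and> \<not> (\<exists>a b. a < b \<and> b < reach x a \<and> reach x b = reach x a)"
    using pop_bv_below_top[OF e] pop_bv_no_shared_end[OF e] by auto
next
  assume "(\<forall>a<n. reach x a < n) \<and> \<not> (\<exists>a b. a < b \<and> b < reach x a \<and> reach x b = reach x a)"
  then interpret pop_target n "reach x"
    using bracket_vector_reach[OF x] by unfold_locales auto
  let ?z = "perm_of_bv (chain_end (reach x) n) 1 n"
  have z: "?z \<in> Av312 n" using perm_of_bv_Av312[OF bracket_vector_chain_end] .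
  have "Pop (Av312 n) weak_le ?z = x"
    using Pop_Av312[OF z] reach_perm_of_bv[OF bracket_vector_chain_end] pop_bv_chain_end
      perm_of_bv_reach[OF x] by simp
  then show "x \<in> Pop (Av312 n) weak_le ` Av312 n" using z by (metis image_eqI)
qed

lemma last_eq_iff_reach_below:
  assumes x: "x \<in> Av312 n" and "n \<ge> 1"
  shows "x ! (n - 1) = n \<longleftrightarrow> (\<forall>a<n. reach x a < n)"
proof
  assume last: "x ! (n - 1) = n"
  show "\<forall>a<n. reach x a < n"
  proof (intro allI impI)
    fix a
    assume "a < n"
    show "reach x a < n"
    proof (rule ccontr)
      assume "\<not> reach x a < n"
      then have "precedes x n a" using precedes_iff_le_reach[OF x \<open>a < n\<close>] by simp
      then obtain i j where "i < j" "j < length x" "x ! i = n"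
        unfolding precedes_def by blast
      then have "i < j" "j < n" "x ! i = n" using Av312D(2)[OF x] by simp_all
      moreover have "i = n - 1" if "i < n" "x ! i = n"
        using nth_eq_iff_index_eq[OF Av312D(1)[OF x], of i "n - 1"] that last Av312D(2)[OF x] assms(2)
        by simp
      ultimately show False by simp
    qed
  qed
next
  assume below: "\<forall>a<n. reach x a < n"
  show "x ! (n - 1) = n"
  proof (rule ccontr)
    let ?v = "x ! (n - 1)"
    assume "?v \<noteq> n"
    moreover have "?v \<in> set x" using Av312D(2)[OF x] assms(2) by simp
    ultimately have "1 \<le> ?v" "?v < n" using Av312D(3)[OF x] by auto
    have "n \<in> set x" using Av312D(3)[OF x] assms(2) by simp
    then obtain i where "i < n" "x ! i = n" using Av312D(2)[OF x] by (auto simp: in_set_conv_nth)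
    then have "i < n - 1" using \<open>?v \<noteq> n\<close> by (cases "i = n - 1") auto
    then have "precedes x n ?v"
      using precedes_nth_iff[OF Av312D(1)[OF x], of i "n - 1"] \<open>i < n\<close> \<open>x ! i = n\<close> Av312D(2)[OF x] by simp
    then have "n \<le> reach x ?v" using reach_ge_if_precedes \<open>?v < n\<close> by blast
    moreover have "reach x ?v < n" using below \<open>?v < n\<close> by blast
    ultimately show False by simp
  qed
qed

lemma reach_prev:
  assumes x: "x \<in> Av312 n" and j: "j < n" "x ! j = a" and bracket: "a < reach x a"
  shows "0 < j" "a < x ! (j - 1)" "reach x (x ! (j - 1)) = reach x a"
proof -
  note dx = Av312D(1)[OF x] and lx = Av312D(2)[OF x]
  have "precedes x (Suc a) (x ! j)" using precedes_iff_le_reach[OF x, of a "Suc a"] bracket j(2) by simp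
  then obtain i where i: "i < j" "x ! i = Suc a" using precedes_nthE[OF dx] j lx by auto
  then show "0 < j" by simp
  let ?p = "x ! (j - 1)"
  have "?p \<noteq> a" using nth_eq_iff_index_eq[OF dx, of "j - 1" j] j lx \<open>0 < j\<close> by simp
  have pa: "precedes x ?p a" using precedes_nth_iff[OF dx, of "j - 1" j] j lx \<open>0 < j\<close> by simp
  show "a < ?p"
  proof (rule ccontr)
    assume "\<not> a < ?p"
    then have "?p < a" using \<open>?p \<noteq> a\<close> by simp
    then have "i < j - 1" using i by (cases "i = j - 1") auto
    then have "precedes x (Suc a) ?p" using precedes_nth_iff[OF dx, of i "j - 1"] i j lx by simp
    then show False using Av312_no_312[OF x \<open>?p < a\<close> lessI _ pa] by blast
  qed
  have "?p \<le> reach x a" using reach_ge_if_precedes[OF \<open>a < ?p\<close> pa] .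
  then have "reach x ?p \<le> reach x a" using reach_nested[OF x \<open>a < ?p\<close>] by blast
  moreover have "reach x a \<le> reach x ?p"
  proof (cases "reach x a = ?p")
    case True
    then show ?thesis using reach_ge[of ?p x] by simp
  next
    case False
    have "precedes x (reach x a) (x ! j)" using precedes_iff_le_reach[OF x bracket] j(2) by simp
    then obtain k where k: "k < j" "x ! k = reach x a" using precedes_nthE[OF dx] j lx by metis
    then have "k < j - 1" using False by (cases "k = j - 1") auto
    then have "precedes x (reach x a) ?p" using precedes_nth_iff[OF dx, of k "j - 1"] k j lx by simp
    then show ?thesis using reach_ge_if_precedes \<open>?p \<le> reach x a\<close> False by simp
  qed
  ultimately show "reach x ?p = reach x a" by simp
qed

lemma double_descent_iff_reach:
  assumes x: "x \<in> Av312 n"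
  shows "(\<exists>i. i + 2 < n \<and> x ! i > x ! (i + 1) \<and> x ! (i + 1) > x ! (i + 2)) \<longleftrightarrow>
    (\<exists>a b. a < b \<and> b < reach x a \<and> reach x b = reach x a)"
proof
  note dx = Av312D(1)[OF x] and lx = Av312D(2)[OF x]
  assume "\<exists>i. i + 2 < n \<and> x ! i > x ! (i + 1) \<and> x ! (i + 1) > x ! (i + 2)"
  then obtain i where i: "i + 2 < n" "x ! (i + 1) < x ! i" "x ! (i + 2) < x ! (i + 1)" by blast
  let ?c = "x ! i" and ?b = "x ! (i + 1)" and ?a = "x ! (i + 2)"
  have "precedes x ?b ?a" "precedes x ?c ?b"
    using precedes_nth_iff[OF dx] i(1) lx by simp_all
  then have b: "?b \<le> reach x ?a" and c: "?c \<le> reach x ?b"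
    using reach_ge_if_precedes i(2,3) by blast+
  have "reach x ?b = reach x ?a" using reach_prev(3)[OF x i(1) refl] b i(3) by simp
  then show "\<exists>a b. a < b \<and> b < reach x a \<and> reach x b = reach x a"
    using c i(2,3) by (intro exI[of _ ?a] exI[of _ ?b]) simp
next
  note dx = Av312D(1)[OF x] and lx = Av312D(2)[OF x]
  assume "\<exists>a b. a < b \<and> b < reach x a \<and> reach x b = reach x a"
  then obtain a b where ab: "a < b" "b < reach x a" "reach x b = reach x a" by blast
  then have "a < reach x a" by simp
  then have "a \<in> set x" using reach_notin[of a x] by auto
  then obtain j where j: "j < n" "x ! j = a" using lx by (auto simp: in_set_conv_nth)
  note prev = reach_prev[OF x j \<open>a < reach x a\<close>]
  let ?p = "x ! (j - 1)"
  have "?p < reach x a"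
  proof (rule ccontr)
    assume "\<not> ?p < reach x a"
    then have p: "?p = reach x a"
      using reach_ge_if_precedes[of a ?p x] prev(1,2) precedes_nth_iff[OF dx, of "j - 1" j] j lx by simp
    have "precedes x b (x ! j)" using precedes_iff_le_reach[OF x ab(1)] ab(2) j(2) by simp
    then obtain k where k: "k < j" "x ! k = b" using precedes_nthE[OF dx] j lx by metis
    then have "k < j - 1" using p ab by (cases "k = j - 1") auto
    then have "precedes x b ?p" using precedes_nth_iff[OF dx, of k "j - 1"] k j lx by simp
    moreover have "precedes x ?p b" using precedes_iff_le_reach[OF x, of b ?p] ab p by simp
    ultimately show False using precedes_asym[OF dx] by blast
  qed
  then have "?p < reach x ?p" using prev by simp
  note prev2 = reach_prev[OF x _ refl this]
  have "j - 1 < n" using j by simp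
  then show "\<exists>i. i + 2 < n \<and> x ! i > x ! (i + 1) \<and> x ! (i + 1) > x ! (i + 2)"
    using prev prev2[OF \<open>j - 1 < n\<close>] j
    by (intro exI[of _ "j - 2"]) (auto simp: numeral_2_eq_2 Suc_diff_Suc)
qed

theorem theorem4p8:
  fixes n :: nat and x :: "nat list"
  assumes "n \<ge> 1" and "x \<in> Av312 n"
  shows "x \<in> Pop (Av312 n) weak_le ` Av312 n \<longleftrightarrow>
    (x ! (n - 1) = n \<and> \<not> (\<exists>i. i + 2 < n \<and> x ! i > x ! (i + 1) \<and> x ! (i + 1) > x ! (i + 2)))"
proof -
  have "x \<in> Pop (Av312 n) weak_le ` Av312 n \<longleftrightarrow>
      (\<forall>a<n. reach x a < n) \<and> \<not> (\<exists>a b. a < b \<and> b < reach x a \<and> reach x b = reach x a)"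
    by (rule Pop_image_Av312_iff[OF assms(2)])
  then show ?thesis
    using last_eq_iff_reach_below[OF assms(2,1)] double_descent_iff_reach[OF assms(2)] by simp
qed

end
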